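(* Let $T$ be a rooted tree whose vertices are identified with their preorder labels, and let $u_1,\dots,u_k,v_1,\dots,v_k$ be vertices of $T$ with $u_i\le v_i$ for all $i$. Then $$\mathrm{LCA}(\mathrm{LCA}(u_1,v_1),\mathrm{LCA}(u_2,v_2),\dots,\mathrm{LCA}(u_k,v_k))=\mathrm{LCA}(\min_i u_i,\max_i v_i).$$
   Context: A preorder labeling of $T$: the root receives label $1$; whenever a vertex receives label $\ell$, its children are ordered arbitrarily as $c_1,\dots,c_k$ and child $c_i$ receives label $\ell+1+\sum_{j<i}\#\mathrm{desc}(c_j)$, where $\#\mathrm{desc}(c)$ is the number of descendants of $c$ (including $c$). Vertices are identified with their labels, and $\le$, $\min$, $\max$ refer to labels. Every vertex is an ancestor of itself. $\mathrm{LCA}(w_1,w_2,\dots)$ denotes the lowest common ancestor in $T$: a common ancestor of all $w_i$ such that no strict descendant of it is a common ancestor of all $w_i$. *)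

theory Defs
  imports Main
begin

text \<open>A rooted tree on a finite vertex set V of natural numbers, given by a parent
function p with root r: the root is its own parent (a sentinel), every other vertex
has its parent in V, and every vertex reaches the root by iterating p.\<close>
definition rooted_tree :: "nat set \<Rightarrow> nat \<Rightarrow> (nat \<Rightarrow> nat) \<Rightarrow> bool" where
  "rooted_tree V r p \<longleftrightarrow> finite V \<and> r \<in> V \<and> p r = r \<and> (\<forall>v\<in>V. p v \<in> V)
     \<and> (\<forall>v\<in>V. \<exists>k. (p ^^ k) v = r)"

definition is_anc :: "(nat \<Rightarrow> nat) \<Rightarrow> nat \<Rightarrow> nat \<Rightarrow> bool" where
  "is_anc p a v \<longleftrightarrow> (\<exists>k. (p ^^ k) v = a)"

definition desc :: "nat set \<Rightarrow> (nat \<Rightarrow> nat) \<Rightarrow> nat \<Rightarrow> nat set" where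
  "desc V p v = {w \<in> V. is_anc p v w}"

definition children :: "nat set \<Rightarrow> (nat \<Rightarrow> nat) \<Rightarrow> nat \<Rightarrow> nat set" where
  "children V p v = {w \<in> V. w \<noteq> v \<and> p w = v}"

text \<open>The vertices (= labels) form a preorder labeling: root is 1, and the children of
each vertex v can be ordered c_1,...,c_k so that c_i = v + 1 + sum_{j<i} #desc(c_j).\<close>
definition preorder_tree :: "nat set \<Rightarrow> (nat \<Rightarrow> nat) \<Rightarrow> bool" where
  "preorder_tree V p \<longleftrightarrow> rooted_tree V 1 p \<and>
     (\<forall>v\<in>V. \<exists>cs. distinct cs \<and> set cs = children V p v \<and>
        (\<forall>i<length cs. cs ! i = v + 1 + (\<Sum>j<i. card (desc V p (cs ! j)))))"

definition is_lca :: "nat set \<Rightarrow> (nat \<Rightarrow> nat) \<Rightarrow> nat set \<Rightarrow> nat \<Rightarrow> bool" where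
  "is_lca V p W x \<longleftrightarrow> x \<in> V \<and> (\<forall>w\<in>W. is_anc p x w) \<and>
     (\<forall>y\<in>V. (\<forall>w\<in>W. is_anc p y w) \<and> is_anc p x y \<longrightarrow> y = x)"

definition lca :: "nat set \<Rightarrow> (nat \<Rightarrow> nat) \<Rightarrow> nat set \<Rightarrow> nat" where
  "lca V p W = (THE x. is_lca V p W x)"

end

theory Submission
  imports Defs
begin

text \<open>In a preorder labelling the descendants of a vertex a are exactly the labels of an
  interval starting at a. Hence a vertex is an ancestor of every element of a set W iff it is
  an ancestor of a least and of a greatest element of W. Since the LCA of W is determined by
  the common ancestors of W, and a vertex is an ancestor of LCA(u_i, v_i) iff it is an ancestor
  of both u_i and v_i, both sides of the identity are LCAs of sets with the same common
  ancestors: all u_i and v_i lie between min u_i and max v_i.\<close>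

lemma rooted_tree_funpow_in:
  assumes "rooted_tree V r p" "v \<in> V" shows "(p ^^ k) v \<in> V"
  using assms by (induction k) (auto simp: rooted_tree_def)

lemma is_anc_refl: "is_anc p a a"
  unfolding is_anc_def by (rule exI[of _ 0]) simp

lemma is_anc_parent: "is_anc p (p w) w"
  unfolding is_anc_def by (rule exI[of _ 1]) simp

lemma is_anc_trans:
  assumes "is_anc p a b" "is_anc p b c" shows "is_anc p a c"
proof -
  obtain i j where "(p ^^ i) b = a" "(p ^^ j) c = b" using assms by (auto simp: is_anc_def)
  then have "(p ^^ (i + j)) c = a" by (simp add: funpow_add)
  then show ?thesis by (auto simp: is_anc_def)
qed

lemma is_anc_in:
  assumes "rooted_tree V r p" "w \<in> V" "is_anc p a w" shows "a \<in> V"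
  using assms rooted_tree_funpow_in by (auto simp: is_anc_def)

lemma is_anc_linear:
  assumes "is_anc p a w" "is_anc p b w" shows "is_anc p a b \<or> is_anc p b a"
proof -
  obtain i j where ij: "(p ^^ i) w = a" "(p ^^ j) w = b" using assms by (auto simp: is_anc_def)
  have "(p ^^ (j - i)) a = b" if "i \<le> j"
    using ij that by (metis funpow_add le_add_diff_inverse2 comp_apply)
  moreover have "(p ^^ (i - j)) b = a" if "j \<le> i"
    using ij that by (metis funpow_add le_add_diff_inverse2 comp_apply)
  ultimately show ?thesis unfolding is_anc_def by (meson nat_le_linear)
qed

lemma desc_eq_insert_UN_children:
  assumes rt: "rooted_tree V r p" and vV: "v \<in> V"
  shows "desc V p v = insert v (\<Union>c\<in>children V p v. desc V p c)"
proof
  have "w = v \<or> (\<exists>c\<in>children V p v. is_anc p c w)" if "w \<in> V" "(p ^^ k) w = v" for k w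
    using that
  proof (induction k arbitrary: w)
    case (Suc k)
    have "p w \<in> V" using Suc.prems(1) rt by (simp add: rooted_tree_def)
    moreover have "(p ^^ k) (p w) = v" using Suc.prems(2) by (simp add: funpow_swap1)
    ultimately consider "p w = v" | c where "c \<in> children V p v" "is_anc p c (p w)"
      using Suc.IH by blast
    then show ?case
      by cases (use Suc.prems(1) is_anc_parent is_anc_trans in \<open>auto simp: children_def is_anc_refl\<close>)
  qed simp
  then show "desc V p v \<subseteq> insert v (\<Union>c\<in>children V p v. desc V p c)"
    by (auto simp: desc_def is_anc_def)
next
  have "is_anc p v c" if "c \<in> children V p v" for c
    using that is_anc_parent[of p c] by (simp add: children_def)
  then show "insert v (\<Union>c\<in>children V p v. desc V p c) \<subseteq> desc V p v"
    using vV by (auto simp: desc_def is_anc_refl intro: is_anc_trans)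
qed

lemma preorder_parent_less:
  assumes pt: "preorder_tree V p" and xV: "x \<in> V" and x1: "x \<noteq> 1"
  shows "p x < x"
proof -
  have rt: "rooted_tree V 1 p" using pt by (simp add: preorder_tree_def)
  have "p x \<noteq> x"
  proof
    assume "p x = x"
    then have "(p ^^ k) x = x" for k by (induction k) simp_all
    moreover obtain k where "(p ^^ k) x = 1" using rt xV by (auto simp: rooted_tree_def)
    ultimately show False using x1 by simp
  qed
  then have "x \<in> children V p (p x)" using xV by (simp add: children_def)
  moreover obtain cs where "set cs = children V p (p x)"
     "\<forall>i<length cs. cs ! i = p x + 1 + (\<Sum>j<i. card (desc V p (cs ! j)))"
    using pt rt xV unfolding preorder_tree_def rooted_tree_def by blast
  ultimately show ?thesis by (metis in_set_conv_nth less_add_one trans_less_add1)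
qed

lemma preorder_is_anc_le:
  assumes pt: "preorder_tree V p" and wV: "w \<in> V" and "is_anc p a w"
  shows "a \<le> w"
proof -
  have rt: "rooted_tree V 1 p" using pt by (simp add: preorder_tree_def)
  have "p x \<le> x" if "x \<in> V" for x
    using preorder_parent_less[OF pt that] rt by (cases "x = 1") (auto simp: rooted_tree_def)
  then have "(p ^^ k) w \<le> w" for k
    by (induction k) (auto intro: order_trans rooted_tree_funpow_in[OF rt wV])
  then show ?thesis using assms(3) by (auto simp: is_anc_def)
qed

lemma UN_consecutive_intervals:
  "(\<Union>i<(n::nat). {b + (\<Sum>j<i. d j)..<b + (\<Sum>j<i. d j) + d i}) = {b..<b + (\<Sum>j<n. d j :: nat)}"
proof (induction n)
  case (Suc n)
  then show ?case by (auto simp: lessThan_Suc)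
qed simp

lemma preorder_desc_eq_interval:
  assumes pt: "preorder_tree V p"
  shows "v \<in> V \<Longrightarrow> desc V p v = {v..<v + card (desc V p v)}"
proof (induction "Max V - v" arbitrary: v rule: less_induct)
  case less
  have rt: "rooted_tree V 1 p" using pt by (simp add: preorder_tree_def)
  obtain cs where cs: "set cs = children V p v"
     "\<forall>i<length cs. cs ! i = v + 1 + (\<Sum>j<i. card (desc V p (cs ! j)))"
    using pt less.prems unfolding preorder_tree_def by blast
  define d where "d j = card (desc V p (cs ! j))" for j
  have desc_child: "desc V p (cs ! i) = {v + 1 + (\<Sum>j<i. d j)..<v + 1 + (\<Sum>j<i. d j) + d i}"
    if i: "i < length cs" for i
  proof -
    have ci: "cs ! i = v + 1 + (\<Sum>j<i. d j)" using cs(2) i unfolding d_def by blast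
    have cV: "cs ! i \<in> V" using cs(1) i nth_mem by (fastforce simp: children_def)
    moreover have "finite V" using rt by (simp add: rooted_tree_def)
    ultimately have "cs ! i \<le> Max V" by simp
    then have "Max V - cs ! i < Max V - v" using ci by linarith
    from less.hyps[OF this cV] show ?thesis unfolding ci d_def .
  qed
  have "children V p v = (!) cs ` {..<length cs}"
    unfolding cs(1)[symmetric] by (auto simp: in_set_conv_nth)
  then have "desc V p v = insert v (\<Union>i<length cs. desc V p (cs ! i))"
    using desc_eq_insert_UN_children[OF rt less.prems] by (simp add: image_image)
  also have "\<dots> = insert v {v + 1..<v + 1 + (\<Sum>j<length cs. d j)}"
    using UN_consecutive_intervals[of "v + 1" d] desc_child by simp
  also have "\<dots> = {v..<v + 1 + (\<Sum>j<length cs. d j)}" by auto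
  finally show ?case by simp
qed

lemma preorder_is_anc_between:
  assumes pt: "preorder_tree V p" and "a \<in> V" "x \<in> V" "z \<in> V"
    and "is_anc p a x" "is_anc p a z" "x \<le> y" "y \<le> z"
  shows "is_anc p a y"
proof -
  obtain e where "desc V p a = {a..<e}" using preorder_desc_eq_interval[OF pt \<open>a \<in> V\<close>] by blast
  moreover have "x \<in> desc V p a" "z \<in> desc V p a" using assms by (auto simp: desc_def)
  ultimately have "y \<in> desc V p a" using assms(7,8) by auto
  then show ?thesis by (simp add: desc_def)
qed

lemma preorder_is_anc_all_iff_bounds:
  assumes pt: "preorder_tree V p" and "W \<subseteq> V" "a \<in> W" "b \<in> W"
    and "\<forall>w\<in>W. a \<le> w \<and> w \<le> b"
  shows "(\<forall>w\<in>W. is_anc p y w) \<longleftrightarrow> is_anc p y a \<and> is_anc p y b"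
proof -
  have "is_anc p y w" if "is_anc p y a" "is_anc p y b" "w \<in> W" for w
  proof -
    have "y \<in> V" using is_anc_in pt that(1) assms(2,3) by (auto simp: preorder_tree_def)
    then show ?thesis using preorder_is_anc_between[OF pt] assms that by (meson subsetD)
  qed
  then show ?thesis using assms(3,4) by blast
qed

lemma preorder_is_lca_lca:
  assumes pt: "preorder_tree V p" and "W \<subseteq> V" "W \<noteq> {}"
  shows "is_lca V p W (lca V p W)"
proof -
  have rt: "rooted_tree V 1 p" using pt by (simp add: preorder_tree_def)
  define CA where "CA = {a \<in> V. \<forall>w\<in>W. is_anc p a w}"
  have "1 \<in> CA" using rt assms(2) by (auto simp: CA_def rooted_tree_def is_anc_def)
  moreover have "finite CA" using rt by (simp add: CA_def rooted_tree_def)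
  ultimately have M: "Max CA \<in> CA" "\<And>y. y \<in> CA \<Longrightarrow> y \<le> Max CA"
    using Max_in by auto
  have lca_Max: "is_lca V p W (Max CA)"
    unfolding is_lca_def
  proof (intro conjI ballI impI)
    show "Max CA \<in> V" "\<And>w. w \<in> W \<Longrightarrow> is_anc p (Max CA) w" using M(1) by (auto simp: CA_def)
    fix y assume "y \<in> V" "(\<forall>w\<in>W. is_anc p y w) \<and> is_anc p (Max CA) y"
    then show "y = Max CA" using M(2)[of y] preorder_is_anc_le[OF pt, of y "Max CA"]
      by (auto simp: CA_def)
  qed
  have Max_unique: "x = Max CA" if x: "is_lca V p W x" for x
  proof -
    obtain w where "w \<in> W" using assms(3) by blast
    then have "is_anc p x (Max CA) \<or> is_anc p (Max CA) x"
      using x M(1) is_anc_linear unfolding is_lca_def CA_def by blast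
    then show ?thesis using x lca_Max M(1) unfolding is_lca_def CA_def by blast
  qed
  have "lca V p W = Max CA" unfolding lca_def using lca_Max Max_unique by (rule the_equality)
  then show ?thesis using lca_Max by simp
qed

lemma preorder_is_anc_lca_iff:
  assumes pt: "preorder_tree V p" and W: "W \<subseteq> V" "W \<noteq> {}"
  shows "is_anc p y (lca V p W) \<longleftrightarrow> (\<forall>w\<in>W. is_anc p y w)"
proof
  let ?l = "lca V p W"
  have l: "?l \<in> V" "\<And>w. w \<in> W \<Longrightarrow> is_anc p ?l w"
    "\<And>x. x \<in> V \<Longrightarrow> \<forall>w\<in>W. is_anc p x w \<Longrightarrow> is_anc p ?l x \<Longrightarrow> x = ?l"
    using preorder_is_lca_lca[OF pt W] unfolding is_lca_def by blast+
  show "\<forall>w\<in>W. is_anc p y w" if "is_anc p y ?l"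
    using that l(2) by (blast intro: is_anc_trans)
  assume y: "\<forall>w\<in>W. is_anc p y w"
  obtain w where w: "w \<in> W" using W(2) by blast
  then have "y \<in> V" using y W(1) pt is_anc_in by (auto simp: preorder_tree_def)
  moreover have "is_anc p y ?l \<or> is_anc p ?l y" using y w l(2) is_anc_linear by blast
  ultimately show "is_anc p y ?l" using l(3) y is_anc_refl by metis
qed

lemma lca_cong_common_ancestors:
  assumes "\<And>y. y \<in> V \<Longrightarrow> (\<forall>w\<in>W. is_anc p y w) \<longleftrightarrow> (\<forall>w\<in>W'. is_anc p y w)"
  shows "lca V p W = lca V p W'"
proof -
  have "is_lca V p W = is_lca V p W'" using assms by (auto simp: is_lca_def fun_eq_iff)
  then show ?thesis by (simp add: lca_def)
qed

theorem corollary5p4: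
  fixes V :: "nat set" and p :: "nat \<Rightarrow> nat" and k :: nat and u v :: "nat \<Rightarrow> nat"
  assumes "preorder_tree V p"
    and "k \<ge> 1"
    and "\<forall>i\<in>{1..k}. u i \<in> V \<and> v i \<in> V \<and> u i \<le> v i"
  shows "lca V p ((\<lambda>i. lca V p {u i, v i}) ` {1..k})
         = lca V p {Min (u ` {1..k}), Max (v ` {1..k})}"
proof (rule lca_cong_common_ancestors)
  let ?I = "{1..k}" and ?m = "Min (u ` {1..k})" and ?M = "Max (v ` {1..k})"
  have bounds: "?m \<in> u ` ?I" "?M \<in> v ` ?I" "\<forall>w\<in>u ` ?I \<union> v ` ?I. ?m \<le> w \<and> w \<le> ?M"
    using assms(2,3) by (auto intro: Min_le_iff[THEN iffD2] Max_ge_iff[THEN iffD2])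
  have W: "u ` ?I \<union> v ` ?I \<subseteq> V" using assms(3) by auto
  fix y
  have "(\<forall>w\<in>(\<lambda>i. lca V p {u i, v i}) ` ?I. is_anc p y w)
      \<longleftrightarrow> (\<forall>w\<in>u ` ?I \<union> v ` ?I. is_anc p y w)"
    using preorder_is_anc_lca_iff[OF assms(1), of "{u _, v _}"] assms(3) by auto
  also have "\<dots> \<longleftrightarrow> (\<forall>w\<in>{?m, ?M}. is_anc p y w)"
    using preorder_is_anc_all_iff_bounds[OF assms(1) W _ _ bounds(3)] bounds(1,2) by simp
  finally show "(\<forall>w\<in>(\<lambda>i. lca V p {u i, v i}) ` ?I. is_anc p y w)
      \<longleftrightarrow> (\<forall>w\<in>{?m, ?M}. is_anc p y w)" .
qed

end
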